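(* Let $\{G(n)\}$ be a sequence of random intersection graphs with $\mathbb E\,Y(n)^2=O(1)$, and let $R(n)$ be the number of $4$-sets $S\subseteq V(G(n))$ that witness a rainbow $K_4$ in $G(n)$. Then $\mathbb E\,R(n)\le(\mathbb E\,Y(n)^2)^4/4!=O(1)$. Furthermore, if for some positive sequence $\varepsilon_n\to0$ we have $n\,\mathbb P(Y(n)\ge\varepsilon_n n^{1/2})\to0$, then with probability tending to $1$, $G(n)$ contains no rainbow $K_4$.
   Context: Random intersection graph: given positive integers $n,m$ and a probability measure $P$ on $\{0,\dots,m\}$, $G(n,m,P)$ has vertex set $V=[n]$ and attribute set $W=\{w_1,\dots,w_m\}$; independent random subsets $S_1,\dots,S_n\subseteq W$ with $\mathbb P(S_v=S)=P(|S|)/\binom{m}{|S|}$; distinct $u,v$ adjacent iff $S_u\cap S_v\ne\emptyset$. For a sequence $G(n)=G(n,m(n),P(n))$ with $m(n)\to\infty$, $X(n)$ has law $P(n)$ and $Y(n)=(n/m)^{1/2}X(n)$. A set $S\subseteq V$ witnesses a rainbow clique if $S$ induces a clique and one can assign to each pair $\{u,v\}\subseteq S$ an attribute in $S_u\cap S_v$ so that all assigned attributes are distinct; $G(n)$ contains a rainbow $K_4$ if some $4$-set is such a witness. *)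

theory Defs
  imports "HOL-Probability.Probability" "HOL-Library.Landau_Symbols"
begin

text \<open>Distribution of one attribute set S_v: first draw |S_v| = k according to P,
  then S_v uniform among k-subsets of W, so P(S_v = S) = P(|S|) / (m choose |S|).\<close>
definition attr_dist :: "nat \<Rightarrow> nat pmf \<Rightarrow> nat set pmf" where
  "attr_dist m P = bind_pmf P (\<lambda>k. pmf_of_set {S. S \<subseteq> {..<m} \<and> card S = k})"

definition RIG :: "nat \<Rightarrow> nat \<Rightarrow> nat pmf \<Rightarrow> (nat \<Rightarrow> nat set) pmf" where
  "RIG n m P = Pi_pmf {..<n} {} (\<lambda>_. attr_dist m P)"

definition rig_adj :: "(nat \<Rightarrow> nat set) \<Rightarrow> nat \<Rightarrow> nat \<Rightarrow> bool" where
  "rig_adj S u v \<longleftrightarrow> u \<noteq> v \<and> S u \<inter> S v \<noteq> {}"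

definition rainbow_witness :: "(nat \<Rightarrow> nat set) \<Rightarrow> nat set \<Rightarrow> bool" where
  "rainbow_witness S T \<longleftrightarrow>
     (\<forall>u\<in>T. \<forall>v\<in>T. u \<noteq> v \<longrightarrow> rig_adj S u v) \<and>
     (\<exists>f :: nat set \<Rightarrow> nat. inj_on f {e. e \<subseteq> T \<and> card e = 2} \<and>
        (\<forall>u\<in>T. \<forall>v\<in>T. u \<noteq> v \<longrightarrow> f {u, v} \<in> S u \<inter> S v))"

definition num_rainbow_K4 :: "nat \<Rightarrow> (nat \<Rightarrow> nat set) \<Rightarrow> nat" where
  "num_rainbow_K4 n S = card {T. T \<subseteq> {..<n} \<and> card T = 4 \<and> rainbow_witness S T}"

definition has_rainbow_K4 :: "nat \<Rightarrow> (nat \<Rightarrow> nat set) \<Rightarrow> bool" where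
  "has_rainbow_K4 n S \<longleftrightarrow> (\<exists>T. T \<subseteq> {..<n} \<and> card T = 4 \<and> rainbow_witness S T)"

text \<open>Y(n) = (n/m)^(1/2) X(n), as a function of the value k of X(n).\<close>
definition Yval :: "nat \<Rightarrow> nat \<Rightarrow> nat \<Rightarrow> real" where
  "Yval n m k = sqrt (real n / real m) * real k"

end

theory Submission
  imports Defs
begin

text \<open>Condition on the sizes \<open>K v = |S v|\<close>. A 4-set \<open>T\<close> witnesses a rainbow \<open>K\<^sub>4\<close> only if
  some injective labelling of its six edges by attributes puts the three labels at each vertex
  into \<open>S v\<close>; as \<open>S v\<close> is a uniform \<open>K v\<close>-subset, a union bound over the \<open>m\<^sup>6\<close> labellings
  gives the conditional probability \<open>min 1 (p\<^sup>3\<^sup>/\<^sup>2) \<le> p\<close> with \<open>p = \<Prod>v\<in>T. K v\<^sup>2 / m\<close>.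
  The sizes are independent, so \<open>p\<close> has expectation \<open>(E X\<^sup>2/m)\<^sup>4 = (E Y\<^sup>2 / n)\<^sup>4\<close>, and there are
  at most \<open>n\<^sup>4/4!\<close> four-sets. When all \<open>K v\<^sup>2/m \<le> \<epsilon>\<^sup>2\<close>, \<open>p\<^sup>3\<^sup>/\<^sup>2 \<le> \<epsilon>\<^sup>4 p\<close> instead, and some
  \<open>Y(v) \<ge> \<epsilon> n\<^sup>1\<^sup>/\<^sup>2\<close> has probability at most \<open>n P(Y \<ge> \<epsilon> n\<^sup>1\<^sup>/\<^sup>2)\<close>.\<close>

lemma real_choose_diff_le:
  "j \<le> k \<Longrightarrow> k \<le> m \<Longrightarrow> real ((m - j) choose (k - j)) \<le> (real k / real m) ^ j * real (m choose k)"
proof (induction j arbitrary: m k)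
  case 0
  then show ?case by simp
next
  case (Suc j)
  then have k1: "k \<ge> 1" and m1: "m \<ge> 1" by auto
  have ratio_le: "real (k - 1) / real (m - 1) \<le> real k / real m"
  proof (cases "m = 1")
    case False
    then have "real m - 1 > 0" using m1 by simp
    moreover have "(real k - 1) * real m \<le> real k * (real m - 1)"
      using Suc.prems by (simp add: algebra_simps)
    ultimately show ?thesis using k1 m1 by (simp add: of_nat_diff field_simps)
  qed simp
  have absorption: "real ((m - 1) choose (k - 1)) = real k / real m * real (m choose k)"
    using binomial_absorption[of "k - 1" m] k1 m1 by (simp add: field_simps flip: of_nat_mult)
  have "real ((m - Suc j) choose (k - Suc j)) = real ((m - 1 - j) choose (k - 1 - j))"
    by simp
  also have "\<dots> \<le> (real (k - 1) / real (m - 1)) ^ j * real ((m - 1) choose (k - 1))"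
    using Suc.IH[of "k - 1" "m - 1"] Suc.prems by auto
  also have "\<dots> \<le> (real k / real m) ^ j * real ((m - 1) choose (k - 1))"
    by (intro mult_right_mono power_mono ratio_le) auto
  also have "\<dots> = (real k / real m) ^ Suc j * real (m choose k)"
    unfolding absorption by simp
  finally show ?case .
qed

definition uniform_subset :: "nat \<Rightarrow> nat \<Rightarrow> nat set pmf" where
  "uniform_subset m k = pmf_of_set {S. S \<subseteq> {..<m} \<and> card S = k}"

lemma finite_subsets_lessThan_card: "finite {S. S \<subseteq> {..<m::nat} \<and> card S = k}"
  by (rule finite_subset[of _ "Pow {..<m}"]) auto

lemma card_subsets_lessThan_card: "card {S. S \<subseteq> {..<m::nat} \<and> card S = k} = m choose k"
  using n_subsets[of "{..<m}" k] by simp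

lemma subsets_lessThan_card_nonempty: "k \<le> m \<Longrightarrow> {S. S \<subseteq> {..<m::nat} \<and> card S = k} \<noteq> {}"
  using card_subsets_lessThan_card[of m k] by (metis card.empty zero_less_binomial_iff not_less0)

lemma set_pmf_uniform_subset:
  "k \<le> m \<Longrightarrow> set_pmf (uniform_subset m k) = {S. S \<subseteq> {..<m} \<and> card S = k}"
  unfolding uniform_subset_def
  using finite_subsets_lessThan_card subsets_lessThan_card_nonempty by simp

lemma card_subsets_containing:
  assumes A: "A \<subseteq> {..<m}" "card A = j" and "j \<le> k"
  shows "card {S. S \<subseteq> {..<m} \<and> card S = k \<and> A \<subseteq> S} = (m - j) choose (k - j)"
proof -
  have finA: "finite A" using A finite_subset by blast
  have "bij_betw (\<lambda>C. C \<union> A) {C. C \<subseteq> {..<m} - A \<and> card C = k - j}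
          {S. S \<subseteq> {..<m} \<and> card S = k \<and> A \<subseteq> S}"
  proof (rule bij_betw_byWitness[where f' = "\<lambda>S. S - A"])
    show "(\<lambda>C. C \<union> A) ` {C. C \<subseteq> {..<m} - A \<and> card C = k - j}
            \<subseteq> {S. S \<subseteq> {..<m} \<and> card S = k \<and> A \<subseteq> S}"
    proof safe
      fix C assume C: "C \<subseteq> {..<m} - A" "card C = k - j"
      then have "card (C \<union> A) = card C + card A"
        using finA by (intro card_Un_disjoint) (auto intro: finite_subset)
      then show "card (C \<union> A) = k" using C A \<open>j \<le> k\<close> by simp
    qed (use A in auto)
    show "(\<lambda>S. S - A) ` {S. S \<subseteq> {..<m} \<and> card S = k \<and> A \<subseteq> S}
            \<subseteq> {C. C \<subseteq> {..<m} - A \<and> card C = k - j}"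
      using A finA by (auto simp: card_Diff_subset)
  qed auto
  then have "card {S. S \<subseteq> {..<m} \<and> card S = k \<and> A \<subseteq> S}
               = card {C. C \<subseteq> {..<m} - A \<and> card C = k - j}"
    by (simp add: bij_betw_same_card)
  also have "\<dots> = (m - j) choose (k - j)"
    using n_subsets[of "{..<m} - A" "k - j"] A finA by (simp add: card_Diff_subset)
  finally show ?thesis .
qed

lemma prob_uniform_subset_superset_le:
  assumes "k \<le> m" and A: "A \<subseteq> {..<m}" "card A = j"
  shows "measure_pmf.prob (uniform_subset m k) {S. A \<subseteq> S} \<le> (real k / real m) ^ j"
proof (cases "j \<le> k")
  case True
  have "{S. S \<subseteq> {..<m} \<and> card S = k} \<inter> {S. A \<subseteq> S}
          = {S. S \<subseteq> {..<m} \<and> card S = k \<and> A \<subseteq> S}"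
    by auto
  then have "measure_pmf.prob (uniform_subset m k) {S. A \<subseteq> S}
          = real ((m - j) choose (k - j)) / real (m choose k)"
    using assms True subsets_lessThan_card_nonempty[OF \<open>k \<le> m\<close>]
    by (simp add: uniform_subset_def measure_pmf_of_set finite_subsets_lessThan_card
        card_subsets_lessThan_card card_subsets_containing)
  also have "\<dots> \<le> (real k / real m) ^ j"
    using real_choose_diff_le[OF True \<open>k \<le> m\<close>] \<open>k \<le> m\<close> by (simp add: divide_le_eq)
  finally show ?thesis .
next
  case False
  have "card A \<le> card S" if "S \<in> set_pmf (uniform_subset m k)" "A \<subseteq> S" for S
    using that \<open>k \<le> m\<close> by (intro card_mono) (auto simp: set_pmf_uniform_subset intro: finite_subset)
  then have "measure_pmf.prob (uniform_subset m k) {S. A \<subseteq> S} = 0"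
    using False A \<open>k \<le> m\<close> by (subst measure_pmf_zero_iff) (auto simp: set_pmf_uniform_subset)
  then show ?thesis by simp
qed

definition edges :: "'a set \<Rightarrow> 'a set set" where
  "edges T = {e. e \<subseteq> T \<and> card e = 2}"

lemma finite_edges: "finite T \<Longrightarrow> finite (edges T)"
  unfolding edges_def by (rule finite_subset[of _ "Pow T"]) auto

lemma card_edges: "finite T \<Longrightarrow> card (edges T) = card T choose 2"
  unfolding edges_def by (rule n_subsets)

lemma card_edges_through:
  assumes "finite T" "v \<in> T"
  shows "card {e \<in> edges T. v \<in> e} = card T - 1"
proof -
  have "{e \<in> edges T. v \<in> e} = (\<lambda>u. {v, u}) ` (T - {v})"
    using assms(2) by (auto simp: card_2_iff edges_def)
  moreover have "inj_on (\<lambda>u. {v, u}) (T - {v})"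
    by (auto simp: inj_on_def doubleton_eq_iff)
  ultimately show ?thesis
    using assms by (simp add: card_image)
qed

lemma card_inj_PiE_lessThan_le:
  "finite E \<Longrightarrow> card {g \<in> E \<rightarrow>\<^sub>E {..<m::nat}. inj_on g E} \<le> m ^ card E"
  using card_mono[OF finite_PiE[of E "\<lambda>_. {..<m}"], of "{g \<in> E \<rightarrow>\<^sub>E {..<m}. inj_on g E}"]
  by (auto simp: card_PiE)

lemma rainbow_witness_labelling:
  assumes "rainbow_witness S T" "\<forall>v\<in>T. S v \<subseteq> {..<m}"
  obtains g where "g \<in> edges T \<rightarrow>\<^sub>E {..<m}" "inj_on g (edges T)"
    "\<forall>v\<in>T. g ` {e \<in> edges T. v \<in> e} \<subseteq> S v"
proof -
  from assms(1) obtain g where inj: "inj_on g (edges T)"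
    and g: "\<forall>u\<in>T. \<forall>v\<in>T. u \<noteq> v \<longrightarrow> g {u, v} \<in> S u \<inter> S v"
    unfolding rainbow_witness_def edges_def by blast
  have at_vertex: "\<forall>v\<in>T. g ` {e \<in> edges T. v \<in> e} \<subseteq> S v"
    using g by (auto simp: card_2_iff edges_def)
  moreover have "\<exists>v\<in>T. v \<in> e" if "e \<in> edges T" for e
    using that by (auto simp: edges_def card_2_iff)
  ultimately have "restrict g (edges T) \<in> edges T \<rightarrow>\<^sub>E {..<m}"
    using assms(2) by fastforce
  moreover have "inj_on (restrict g (edges T)) (edges T)"
    using inj by (simp add: inj_on_def)
  ultimately show ?thesis
    using at_vertex by (intro that[of "restrict g (edges T)"]) auto
qed

definition RIG_given_sizes :: "nat \<Rightarrow> nat \<Rightarrow> (nat \<Rightarrow> nat) \<Rightarrow> (nat \<Rightarrow> nat set) pmf" where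
  "RIG_given_sizes n m K = Pi_pmf {..<n} {} (\<lambda>v. uniform_subset m (K v))"

lemma RIG_eq_bind_sizes: "RIG n m P = bind_pmf (Pi_pmf {..<n} 0 (\<lambda>_. P)) (RIG_given_sizes n m)"
proof -
  have "attr_dist m P = bind_pmf P (uniform_subset m)"
    unfolding attr_dist_def uniform_subset_def by simp
  then show ?thesis
    unfolding RIG_def RIG_given_sizes_def by (simp add: Pi_pmf_bind[where d'=0])
qed

lemma prob_RIG_given_sizes_superset_le:
  assumes K: "\<forall>v<n. K v \<le> m" and T: "T \<subseteq> {..<n}"
    and A: "\<And>v. v \<in> T \<Longrightarrow> A v \<subseteq> {..<m} \<and> card (A v) = j"
  shows "measure_pmf.prob (RIG_given_sizes n m K) {S. \<forall>v\<in>T. A v \<subseteq> S v}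
           \<le> (\<Prod>v\<in>T. (real (K v) / real m) ^ j)"
proof -
  define B where "B v = (if v \<in> T then {X. A v \<subseteq> X} else UNIV)" for v
  have "{S. \<forall>v\<in>T. A v \<subseteq> S v} = Pi {..<n} B"
    unfolding B_def using T by (auto simp: Pi_def)
  then have "measure_pmf.prob (RIG_given_sizes n m K) {S. \<forall>v\<in>T. A v \<subseteq> S v}
               = (\<Prod>v<n. measure_pmf.prob (uniform_subset m (K v)) (B v))"
    unfolding RIG_given_sizes_def by (simp add: measure_Pi_pmf_Pi)
  also have "\<dots> = (\<Prod>v\<in>T. measure_pmf.prob (uniform_subset m (K v)) {X. A v \<subseteq> X})"
    unfolding B_def using T by (intro prod.mono_neutral_cong_right) auto
  also have "\<dots> \<le> (\<Prod>v\<in>T. (real (K v) / real m) ^ j)"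
    using K T A by (intro prod_mono conjI prob_uniform_subset_superset_le) auto
  finally show ?thesis .
qed

lemma prob_rainbow_witness_given_sizes_le_labellings:
  assumes K: "\<forall>v<n. K v \<le> m" and T: "T \<subseteq> {..<n}" "card T = 4"
  shows "measure_pmf.prob (RIG_given_sizes n m K) {S. rainbow_witness S T}
           \<le> real m ^ 6 * (\<Prod>v\<in>T. (real (K v) / real m) ^ 3)"
proof -
  define L where "L = {g \<in> edges T \<rightarrow>\<^sub>E {..<m}. inj_on g (edges T)}"
  define B where "B g = {S. \<forall>v\<in>T. g ` {e \<in> edges T. v \<in> e} \<subseteq> S v}" for g :: "nat set \<Rightarrow> nat"
  define M where "M = RIG_given_sizes n m K"
  have finT: "finite T" using T finite_subset by blast
  have fin_edges: "finite (edges T)" using finT by (rule finite_edges)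
  have card_edges_T: "card (edges T) = 6"
    using card_edges[OF finT] T by (simp add: choose_two)
  have finL: "finite L" unfolding L_def using fin_edges by (simp add: finite_PiE)
  have cardL: "real (card L) \<le> real m ^ 6"
    using card_inj_PiE_lessThan_le[OF fin_edges, of m] card_edges_T
    unfolding L_def by (simp flip: of_nat_power)
  have "{S. rainbow_witness S T} \<inter> set_pmf M \<subseteq> (\<Union>g\<in>L. B g)"
  proof safe
    fix S assume witness: "rainbow_witness S T" and S: "S \<in> set_pmf M"
    have "\<forall>v\<in>T. S v \<subseteq> {..<m}"
      using S K T unfolding M_def RIG_given_sizes_def
      by (auto simp: set_Pi_pmf PiE_dflt_def set_pmf_uniform_subset)
    with witness obtain g where "g \<in> L" "\<forall>v\<in>T. g ` {e \<in> edges T. v \<in> e} \<subseteq> S v"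
      unfolding L_def by (elim rainbow_witness_labelling) auto
    then show "S \<in> (\<Union>g\<in>L. B g)"
      unfolding B_def by blast
  qed
  then have "measure_pmf.prob M {S. rainbow_witness S T} \<le> measure_pmf.prob M (\<Union>g\<in>L. B g)"
    by (subst measure_Int_set_pmf[symmetric]) (rule measure_pmf.finite_measure_mono, auto)
  also have "\<dots> \<le> (\<Sum>g\<in>L. measure_pmf.prob M (B g))"
    by (rule measure_pmf.finite_measure_subadditive_finite[OF finL]) simp
  also have "\<dots> \<le> (\<Sum>g\<in>L. \<Prod>v\<in>T. (real (K v) / real m) ^ 3)"
  proof (intro sum_mono)
    fix g assume g: "g \<in> L"
    have "g ` {e \<in> edges T. v \<in> e} \<subseteq> {..<m} \<and> card (g ` {e \<in> edges T. v \<in> e}) = 3" if "v \<in> T" for v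
    proof
      show "g ` {e \<in> edges T. v \<in> e} \<subseteq> {..<m}" using g unfolding L_def by auto
      have "inj_on g {e \<in> edges T. v \<in> e}" using g unfolding L_def by (auto intro: inj_on_subset)
      then show "card (g ` {e \<in> edges T. v \<in> e}) = 3"
        using card_edges_through[OF finT that] T by (simp add: card_image)
    qed
    then show "measure_pmf.prob M (B g) \<le> (\<Prod>v\<in>T. (real (K v) / real m) ^ 3)"
      unfolding M_def B_def by (rule prob_RIG_given_sizes_superset_le[OF K T(1)])
  qed
  also have "\<dots> \<le> real m ^ 6 * (\<Prod>v\<in>T. (real (K v) / real m) ^ 3)"
    using cardL by (simp add: mult_right_mono prod_nonneg)
  finally show ?thesis unfolding M_def .
qed

lemma min_one_le_of_sq_eq_cube:
  fixes p x :: real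
  assumes "0 \<le> p" "x\<^sup>2 = p ^ 3"
  shows "min 1 x \<le> p"
proof (cases "p \<ge> 1")
  case False
  have "x\<^sup>2 \<le> p\<^sup>2"
    using assms False by (simp add: power_decreasing)
  then show ?thesis
    using assms(1) power2_le_imp_le by fastforce
qed simp

lemma le_mult_of_sq_eq_cube:
  fixes p x c :: real
  assumes "0 \<le> p" "0 \<le> c" "x\<^sup>2 = p ^ 3" "p \<le> c\<^sup>2"
  shows "x \<le> c * p"
proof -
  have "x\<^sup>2 = p * p\<^sup>2" using assms(3) by (simp add: power3_eq_cube power2_eq_square)
  also have "\<dots> \<le> c\<^sup>2 * p\<^sup>2" using assms(4) by (intro mult_right_mono) auto
  also have "\<dots> = (c * p)\<^sup>2" by (simp add: power_mult_distrib)
  finally show ?thesis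
    by (rule power2_le_imp_le) (use assms(1,2) in simp)
qed

definition size_weight :: "nat \<Rightarrow> nat \<Rightarrow> real" where
  "size_weight m k = real k ^ 2 / real m"

lemma Yval_sq_eq: "(Yval n m k)\<^sup>2 = real n * size_weight m k"
  unfolding Yval_def size_weight_def by (simp add: power_mult_distrib)

lemma size_weight_nonneg: "0 \<le> size_weight m k"
  unfolding size_weight_def by simp

lemma size_weight_le_of_Yval_less:
  assumes "n \<ge> 1" "Yval n m k < e * sqrt (real n)"
  shows "size_weight m k \<le> e\<^sup>2"
proof -
  have "real n * size_weight m k = (Yval n m k)\<^sup>2"
    by (simp add: Yval_sq_eq)
  also have "\<dots> \<le> (e * sqrt (real n))\<^sup>2"
    using assms(2) by (intro power_mono) (auto simp: Yval_def)
  also have "\<dots> = real n * e\<^sup>2"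
    by (simp add: power_mult_distrib)
  finally show ?thesis
    using assms(1) by simp
qed

text \<open>The exponents \<open>6\<close> and \<open>3\<close> count the edges of \<open>T\<close> and the edges at each vertex.\<close>
lemma labelling_bound_sq_eq_cube:
  assumes "m \<ge> 1" "finite T" "card T = 4"
  shows "(real m ^ 6 * (\<Prod>v\<in>T. (real (K v) / real m) ^ 3))\<^sup>2 = (\<Prod>v\<in>T. size_weight m (K v)) ^ 3"
proof -
  have "(\<Prod>v\<in>T. real m ^ 3) = real m ^ 12"
    using assms(3) by (simp flip: power_mult)
  then have "(real m ^ 6 * (\<Prod>v\<in>T. (real (K v) / real m) ^ 3))\<^sup>2
      = (\<Prod>v\<in>T. real m ^ 3) * (\<Prod>v\<in>T. (real (K v) / real m) ^ 6)"
    by (simp add: power_mult_distrib prod_power_distrib flip: power_mult)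
  also have "\<dots> = (\<Prod>v\<in>T. real m ^ 3 * (real (K v) / real m) ^ 6)"
    by (simp add: prod.distrib)
  also have "\<dots> = (\<Prod>v\<in>T. size_weight m (K v) ^ 3)"
    using assms(1) unfolding size_weight_def
    by (intro prod.cong refl)
      (simp add: power_divide flip: power_mult, simp add: field_simps eval_nat_numeral flip: power_add)
  finally show ?thesis by (simp add: prod_power_distrib)
qed

lemma prob_rainbow_witness_given_sizes_le:
  assumes "m \<ge> 1" "\<forall>v<n. K v \<le> m" "T \<subseteq> {..<n}" "card T = 4"
  shows "measure_pmf.prob (RIG_given_sizes n m K) {S. rainbow_witness S T}
           \<le> (\<Prod>v\<in>T. size_weight m (K v))"
proof -
  have "measure_pmf.prob (RIG_given_sizes n m K) {S. rainbow_witness S T}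
          \<le> min 1 (real m ^ 6 * (\<Prod>v\<in>T. (real (K v) / real m) ^ 3))"
    using prob_rainbow_witness_given_sizes_le_labellings[OF assms(2-)] by simp
  also have "\<dots> \<le> (\<Prod>v\<in>T. size_weight m (K v))"
    using assms finite_subset[OF assms(3)]
    by (intro min_one_le_of_sq_eq_cube labelling_bound_sq_eq_cube prod_nonneg size_weight_nonneg) auto
  finally show ?thesis .
qed

lemma prob_rainbow_witness_given_small_sizes_le:
  assumes "m \<ge> 1" "\<forall>v<n. K v \<le> m" "T \<subseteq> {..<n}" "card T = 4"
    and "0 \<le> c" "\<forall>v\<in>T. size_weight m (K v) \<le> c\<^sup>2"
  shows "measure_pmf.prob (RIG_given_sizes n m K) {S. rainbow_witness S T}
           \<le> c ^ 4 * (\<Prod>v\<in>T. size_weight m (K v))"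
proof -
  have "(\<Prod>v\<in>T. size_weight m (K v)) \<le> (\<Prod>v\<in>T. c\<^sup>2)"
    using assms(6) by (intro prod_mono) (auto simp: size_weight_nonneg)
  also have "\<dots> = (c ^ 4)\<^sup>2"
    using assms(4) by (simp flip: power_mult)
  finally have "real m ^ 6 * (\<Prod>v\<in>T. (real (K v) / real m) ^ 3) \<le> c ^ 4 * (\<Prod>v\<in>T. size_weight m (K v))"
    using assms finite_subset[OF assms(3)]
    by (intro le_mult_of_sq_eq_cube labelling_bound_sq_eq_cube prod_nonneg size_weight_nonneg) auto
  with prob_rainbow_witness_given_sizes_le_labellings[OF assms(2-4)] show ?thesis
    by linarith
qed

definition four_sets :: "nat \<Rightarrow> nat set set" where
  "four_sets n = {T. T \<subseteq> {..<n} \<and> card T = 4}"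

lemma finite_four_sets: "finite (four_sets n)"
  unfolding four_sets_def by (rule finite_subset[of _ "Pow {..<n}"]) auto

lemma card_four_sets: "card (four_sets n) = n choose 4"
  unfolding four_sets_def using n_subsets[of "{..<n}" 4] by simp

lemma num_rainbow_K4_eq_sum_indicator:
  "real (num_rainbow_K4 n S) = (\<Sum>T\<in>four_sets n. indicator {S. rainbow_witness S T} S)"
proof -
  have "num_rainbow_K4 n S = card {T \<in> four_sets n. rainbow_witness S T}"
    unfolding num_rainbow_K4_def four_sets_def by (metis (mono_tags, lifting) mem_Collect_eq)
  then show ?thesis
    using finite_four_sets by (simp add: indicator_def sum.If_cases Int_def)
qed

lemma num_rainbow_K4_le_card_four_sets: "num_rainbow_K4 n S \<le> card (four_sets n)"
  unfolding num_rainbow_K4_def four_sets_def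
  using finite_four_sets[of n] by (intro card_mono) (auto simp: four_sets_def)

lemma has_rainbow_K4_eq_Union: "{S. has_rainbow_K4 n S} = (\<Union>T\<in>four_sets n. {S. rainbow_witness S T})"
  unfolding has_rainbow_K4_def four_sets_def by auto

definition clique_weight :: "nat \<Rightarrow> nat \<Rightarrow> (nat \<Rightarrow> nat) \<Rightarrow> real" where
  "clique_weight n m K = (\<Sum>T\<in>four_sets n. \<Prod>v\<in>T. size_weight m (K v))"

lemma clique_weight_nonneg: "0 \<le> clique_weight n m K"
  unfolding clique_weight_def by (intro sum_nonneg prod_nonneg size_weight_nonneg)

lemma expected_num_rainbow_K4_given_sizes_le:
  assumes "m \<ge> 1" "\<forall>v<n. K v \<le> m"
  shows "measure_pmf.expectation (RIG_given_sizes n m K) (\<lambda>S. real (num_rainbow_K4 n S))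
           \<le> clique_weight n m K"
proof -
  have "measure_pmf.expectation (RIG_given_sizes n m K) (\<lambda>S. real (num_rainbow_K4 n S))
          = (\<Sum>T\<in>four_sets n. measure_pmf.prob (RIG_given_sizes n m K) {S. rainbow_witness S T})"
    unfolding num_rainbow_K4_eq_sum_indicator
    by (subst Bochner_Integration.integral_sum) (auto intro: measure_pmf.integrable_const_bound[where B=1])
  also have "\<dots> \<le> clique_weight n m K"
    unfolding clique_weight_def using assms
    by (intro sum_mono prob_rainbow_witness_given_sizes_le) (auto simp: four_sets_def)
  finally show ?thesis .
qed

lemma prob_has_rainbow_K4_given_small_sizes_le:
  assumes "m \<ge> 1" "\<forall>v<n. K v \<le> m" "0 \<le> c" "\<forall>v<n. size_weight m (K v) \<le> c\<^sup>2"
  shows "measure_pmf.prob (RIG_given_sizes n m K) {S. has_rainbow_K4 n S} \<le> c ^ 4 * clique_weight n m K"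
proof -
  have "measure_pmf.prob (RIG_given_sizes n m K) {S. has_rainbow_K4 n S}
          \<le> (\<Sum>T\<in>four_sets n. measure_pmf.prob (RIG_given_sizes n m K) {S. rainbow_witness S T})"
    unfolding has_rainbow_K4_eq_Union
    by (rule measure_pmf.finite_measure_subadditive_finite[OF finite_four_sets]) simp
  also have "\<dots> \<le> (\<Sum>T\<in>four_sets n. c ^ 4 * (\<Prod>v\<in>T. size_weight m (K v)))"
    using assms by (intro sum_mono prob_rainbow_witness_given_small_sizes_le) (auto simp: four_sets_def)
  finally show ?thesis
    by (simp add: clique_weight_def sum_distrib_left)
qed

lemma measure_bind_pmf:
  "measure_pmf.prob (bind_pmf M N) X = measure_pmf.expectation M (\<lambda>x. measure_pmf.prob (N x) X)"
  unfolding measure_pmf_bind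
  by (rule measure_pmf.measure_bind[where N="count_space UNIV"]) (auto intro: measure_pmf_in_subprob_algebra)

lemma expectation_bind_pmf_bounded:
  fixes f :: "'b \<Rightarrow> real"
  assumes "\<And>y. \<bar>f y\<bar> \<le> B"
  shows "measure_pmf.expectation (bind_pmf M N) f = measure_pmf.expectation M (\<lambda>x. measure_pmf.expectation (N x) f)"
  unfolding measure_pmf_bind using assms
  by (intro integral_bind[where K="count_space UNIV" and B=B and B'=1])
    (auto intro: measure_pmf_in_subprob_algebra prob_space_imp_subprob_space measure_pmf.prob_space_axioms)

lemma expectation_Pi_pmf_prod_subset:
  fixes f :: "'b \<Rightarrow> real"
  assumes "finite A" "T \<subseteq> A" "\<And>x. x \<in> set_pmf p \<Longrightarrow> 0 \<le> f x" "integrable (measure_pmf p) f"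
  shows "measure_pmf.expectation (Pi_pmf A d (\<lambda>_. p)) (\<lambda>y. \<Prod>v\<in>T. f (y v))
           = measure_pmf.expectation p f ^ card T"
proof -
  define g where "g v = (if v \<in> T then f else (\<lambda>_. 1))" for v
  have "(\<lambda>y. \<Prod>v\<in>T. f (y v)) = (\<lambda>y. \<Prod>v\<in>A. g v (y v))"
    unfolding g_def using assms(1,2) by (intro ext prod.mono_neutral_cong_left) auto
  then have "measure_pmf.expectation (Pi_pmf A d (\<lambda>_. p)) (\<lambda>y. \<Prod>v\<in>T. f (y v))
               = measure_pmf.expectation (Pi_pmf A d (\<lambda>_. p)) (\<lambda>y. \<Prod>v\<in>A. g v (y v))"
    by simp
  also have "\<dots> = (\<Prod>v\<in>A. measure_pmf.expectation p (g v))"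
    by (rule expectation_prod_Pi_pmf) (use assms in \<open>auto simp: g_def\<close>)
  also have "\<dots> = (\<Prod>v\<in>T. measure_pmf.expectation p f)"
    unfolding g_def using assms(1,2) by (intro prod.mono_neutral_cong_right) auto
  finally show ?thesis by simp
qed

lemma prob_Pi_pmf_ex_component_le:
  "measure_pmf.prob (Pi_pmf {..<n} d (\<lambda>_. p)) {y. \<exists>v<n. y v \<in> B} \<le> real n * measure_pmf.prob p B"
proof -
  have union: "{y. \<exists>v<n. y v \<in> B} = (\<Union>v<n. {y. y v \<in> B})" by auto
  have "measure_pmf.prob (Pi_pmf {..<n} d (\<lambda>_. p)) {y. \<exists>v<n. y v \<in> B}
          \<le> (\<Sum>v<n. measure_pmf.prob (Pi_pmf {..<n} d (\<lambda>_. p)) {y. y v \<in> B})"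
    unfolding union by (rule measure_pmf.finite_measure_subadditive_finite) auto
  also have "\<dots> = (\<Sum>v<n. measure_pmf.prob p B)"
  proof (intro sum.cong refl)
    fix v assume "v \<in> {..<n}"
    then have "map_pmf (\<lambda>y. y v) (Pi_pmf {..<n} d (\<lambda>_. p)) = p"
      by (subst Pi_pmf_component) auto
    moreover have "measure_pmf.prob (Pi_pmf {..<n} d (\<lambda>_. p)) {y. y v \<in> B}
                     = measure_pmf.prob (map_pmf (\<lambda>y. y v) (Pi_pmf {..<n} d (\<lambda>_. p))) B"
      by (simp add: vimage_def)
    ultimately show "measure_pmf.prob (Pi_pmf {..<n} d (\<lambda>_. p)) {y. y v \<in> B} = measure_pmf.prob p B"
      by simp
  qed
  finally show ?thesis by simp
qed

lemma set_pmf_Pi_pmf_bounded: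
  assumes "K \<in> set_pmf (Pi_pmf {..<n::nat} 0 (\<lambda>_. P))" "set_pmf P \<subseteq> {0..m}"
  shows "\<forall>v<n. K v \<le> m"
  using assms by (subst (asm) set_Pi_pmf) (auto simp: PiE_dflt_def)

lemma finite_set_pmf_Pi_pmf_const:
  "finite (set_pmf p) \<Longrightarrow> finite (set_pmf (Pi_pmf {..<n::nat} d (\<lambda>_. p)))"
  by (subst set_Pi_pmf) (auto intro!: finite_PiE_dflt)

lemma expectation_clique_weight:
  assumes "finite (set_pmf P)"
  shows "measure_pmf.expectation (Pi_pmf {..<n} 0 (\<lambda>_. P)) (clique_weight n m)
           = real (n choose 4) * measure_pmf.expectation P (size_weight m) ^ 4"
proof -
  have "measure_pmf.expectation (Pi_pmf {..<n} 0 (\<lambda>_. P)) (clique_weight n m)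
          = (\<Sum>T\<in>four_sets n. measure_pmf.expectation (Pi_pmf {..<n} 0 (\<lambda>_. P))
               (\<lambda>K. \<Prod>v\<in>T. size_weight m (K v)))"
    unfolding clique_weight_def
    by (intro Bochner_Integration.integral_sum integrable_measure_pmf_finite
        finite_set_pmf_Pi_pmf_const assms)
  also have "\<dots> = (\<Sum>T\<in>four_sets n. measure_pmf.expectation P (size_weight m) ^ 4)"
    using assms
    by (intro sum.cong refl, subst expectation_Pi_pmf_prod_subset)
      (auto simp: four_sets_def size_weight_nonneg integrable_measure_pmf_finite)
  finally show ?thesis by (simp add: card_four_sets)
qed

lemma choose_four_mult_le:
  fixes w :: real
  assumes "0 \<le> w"
  shows "real (n choose 4) * w ^ 4 \<le> (real n * w) ^ 4 / fact 4"
proof -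
  have "real (n choose 4) * fact 4 \<le> real n ^ 4"
    using binomial_fact_pow[of n 4] by (metis of_nat_fact of_nat_le_iff of_nat_mult of_nat_power)
  then have "real (n choose 4) * fact 4 * w ^ 4 / fact 4 \<le> real n ^ 4 * w ^ 4 / fact 4"
    using assms by (intro divide_right_mono mult_right_mono) auto
  then show ?thesis
    by (simp add: power_mult_distrib)
qed

lemma expectation_clique_weight_le:
  assumes "finite (set_pmf P)"
  shows "measure_pmf.expectation (Pi_pmf {..<n} 0 (\<lambda>_. P)) (clique_weight n m)
           \<le> measure_pmf.expectation P (\<lambda>k. (Yval n m k)\<^sup>2) ^ 4 / fact 4"
proof -
  have "measure_pmf.expectation (Pi_pmf {..<n} 0 (\<lambda>_. P)) (clique_weight n m)
          \<le> (real n * measure_pmf.expectation P (size_weight m)) ^ 4 / fact 4"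
    unfolding expectation_clique_weight[OF assms]
    by (intro choose_four_mult_le Bochner_Integration.integral_nonneg_AE AE_pmfI size_weight_nonneg)
  then show ?thesis
    by (simp add: Yval_sq_eq)
qed

lemma expected_num_rainbow_K4_le:
  assumes "m \<ge> 1" "set_pmf P \<subseteq> {0..m}"
  shows "measure_pmf.expectation (RIG n m P) (\<lambda>S. real (num_rainbow_K4 n S))
           \<le> measure_pmf.expectation P (\<lambda>k. (Yval n m k)\<^sup>2) ^ 4 / fact 4"
proof -
  define Q where "Q = Pi_pmf {..<n} 0 (\<lambda>_. P)"
  have finQ: "finite (set_pmf Q)"
    unfolding Q_def using assms(2) by (intro finite_set_pmf_Pi_pmf_const) (auto intro: finite_subset)
  have "measure_pmf.expectation (RIG n m P) (\<lambda>S. real (num_rainbow_K4 n S))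
          = measure_pmf.expectation Q
              (\<lambda>K. measure_pmf.expectation (RIG_given_sizes n m K) (\<lambda>S. real (num_rainbow_K4 n S)))"
    unfolding RIG_eq_bind_sizes Q_def
    by (rule expectation_bind_pmf_bounded[where B = "real (card (four_sets n))"])
      (simp add: num_rainbow_K4_le_card_four_sets)
  also have "\<dots> \<le> measure_pmf.expectation Q (clique_weight n m)"
    using assms unfolding Q_def
    by (intro integral_mono_AE integrable_measure_pmf_finite finQ[unfolded Q_def] AE_pmfI
        expected_num_rainbow_K4_given_sizes_le set_pmf_Pi_pmf_bounded) auto
  also have "\<dots> \<le> measure_pmf.expectation P (\<lambda>k. (Yval n m k)\<^sup>2) ^ 4 / fact 4"
    unfolding Q_def using assms(2) by (intro expectation_clique_weight_le) (auto intro: finite_subset)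
  finally show ?thesis .
qed

lemma prob_has_rainbow_K4_le:
  assumes "m \<ge> 1" "set_pmf P \<subseteq> {0..m}" "e > 0"
  shows "measure_pmf.prob (RIG n m P) {S. has_rainbow_K4 n S}
           \<le> real n * measure_pmf.prob P {k. Yval n m k \<ge> e * sqrt (real n)}
             + e ^ 4 * (measure_pmf.expectation P (\<lambda>k. (Yval n m k)\<^sup>2) ^ 4 / fact 4)"
proof -
  define Q where "Q = Pi_pmf {..<n} 0 (\<lambda>_. P)"
  define bad where "bad = {K. \<exists>v<n. K v \<in> {k. Yval n m k \<ge> e * sqrt (real n)}}"
  have finQ: "finite (set_pmf Q)"
    unfolding Q_def using assms(2) by (intro finite_set_pmf_Pi_pmf_const) (auto intro: finite_subset)
  have given: "measure_pmf.prob (RIG_given_sizes n m K) {S. has_rainbow_K4 n S}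
                 \<le> indicator bad K + e ^ 4 * clique_weight n m K" if "K \<in> set_pmf Q" for K
  proof (cases "K \<in> bad")
    case True
    then show ?thesis
      using assms(3) clique_weight_nonneg[of n m K] measure_pmf.prob_le_1 by (simp add: add_increasing2)
  next
    case False
    have "size_weight m (K v) \<le> e\<^sup>2" if "v < n" for v
      using False that unfolding bad_def by (intro size_weight_le_of_Yval_less[where n = n]) (auto simp: not_le)
    then show ?thesis
      using assms that False unfolding Q_def
      by (simp add: prob_has_rainbow_K4_given_small_sizes_le set_pmf_Pi_pmf_bounded)
  qed
  have "measure_pmf.prob (RIG n m P) {S. has_rainbow_K4 n S}
          = measure_pmf.expectation Q (\<lambda>K. measure_pmf.prob (RIG_given_sizes n m K) {S. has_rainbow_K4 n S})"
    unfolding RIG_eq_bind_sizes Q_def by (rule measure_bind_pmf)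
  also have "\<dots> \<le> measure_pmf.expectation Q (\<lambda>K. indicator bad K + e ^ 4 * clique_weight n m K)"
    by (intro integral_mono_AE integrable_measure_pmf_finite finQ AE_pmfI given)
  also have "\<dots> = measure_pmf.prob Q bad + e ^ 4 * measure_pmf.expectation Q (clique_weight n m)"
    by (simp add: integrable_measure_pmf_finite[OF finQ])
  also have "\<dots> \<le> real n * measure_pmf.prob P {k. Yval n m k \<ge> e * sqrt (real n)}
                     + e ^ 4 * (measure_pmf.expectation P (\<lambda>k. (Yval n m k)\<^sup>2) ^ 4 / fact 4)"
  proof (intro add_mono mult_left_mono)
    show "measure_pmf.prob Q bad \<le> real n * measure_pmf.prob P {k. Yval n m k \<ge> e * sqrt (real n)}"
      unfolding Q_def bad_def by (rule prob_Pi_pmf_ex_component_le)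
    show "measure_pmf.expectation Q (clique_weight n m)
            \<le> measure_pmf.expectation P (\<lambda>k. (Yval n m k)\<^sup>2) ^ 4 / fact 4"
      unfolding Q_def using assms(2) by (intro expectation_clique_weight_le) (auto intro: finite_subset)
  qed (use assms(3) in auto)
  finally show ?thesis .
qed

lemma bigo_one_of_le:
  fixes f g :: "'a \<Rightarrow> real"
  assumes "eventually (\<lambda>x. 0 \<le> f x \<and> f x \<le> g x) F" "g \<in> O[F](\<lambda>_. 1)"
  shows "f \<in> O[F](\<lambda>_. 1)"
proof -
  have "f \<in> O[F](g)"
    using assms(1) by (intro landau_o.big_mono) (auto elim!: eventually_mono)
  then show ?thesis
    using assms(2) by (rule landau_o.big_trans)
qed

lemma tendsto_zero_of_le_add_mult_bigo_one:
  fixes a b c d :: "'a \<Rightarrow> real"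
  assumes "eventually (\<lambda>x. 0 \<le> a x \<and> a x \<le> b x + d x * c x) F"
    and "(b \<longlongrightarrow> 0) F" "(d \<longlongrightarrow> 0) F" "c \<in> O[F](\<lambda>_. 1)"
  shows "(a \<longlongrightarrow> 0) F"
proof (rule real_tendsto_sandwich[OF _ _ tendsto_const])
  have "d \<in> o[F](\<lambda>_. 1)"
    using assms(3) by (intro smalloI_tendsto) auto
  from landau_o.small_big_mult[OF this assms(4)] have "((\<lambda>x. d x * c x) \<longlongrightarrow> 0) F"
    by (auto dest: smalloD_tendsto)
  then show "((\<lambda>x. b x + d x * c x) \<longlongrightarrow> 0) F"
    using assms(2) by (rule tendsto_add_zero[rotated])
qed (use assms(1) in \<open>auto elim: eventually_mono\<close>)

theorem mainTheorem16:
  fixes m :: "nat \<Rightarrow> nat" and P :: "nat \<Rightarrow> nat pmf"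
  assumes m_pos: "\<And>n. n \<ge> 1 \<Longrightarrow> m n \<ge> 1"
    and P_supp: "\<And>n. n \<ge> 1 \<Longrightarrow> set_pmf (P n) \<subseteq> {0..m n}"
    and m_inf: "filterlim m at_top sequentially"
    and EY2_bdd: "(\<lambda>n. measure_pmf.expectation (P n) (\<lambda>k. (Yval n (m n) k)\<^sup>2)) \<in> O(\<lambda>_. 1)"
  shows "(\<forall>n\<ge>1. measure_pmf.expectation (RIG n (m n) (P n)) (\<lambda>S. real (num_rainbow_K4 n S))
            \<le> (measure_pmf.expectation (P n) (\<lambda>k. (Yval n (m n) k)\<^sup>2)) ^ 4 / fact 4)
       \<and> (\<lambda>n. measure_pmf.expectation (RIG n (m n) (P n)) (\<lambda>S. real (num_rainbow_K4 n S)))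
            \<in> O(\<lambda>_. 1)
       \<and> ((\<exists>\<epsilon> :: nat \<Rightarrow> real. (\<forall>n. \<epsilon> n > 0) \<and> \<epsilon> \<longlonglongrightarrow> 0 \<and>
              (\<lambda>n. real n * measure_pmf.prob (P n) {k. Yval n (m n) k \<ge> \<epsilon> n * sqrt (real n)})
                \<longlonglongrightarrow> 0)
          \<longrightarrow> (\<lambda>n. measure_pmf.prob (RIG n (m n) (P n)) {S. has_rainbow_K4 n S}) \<longlonglongrightarrow> 0)"
proof -
  \<comment> \<open>The bounds hold for every \<open>m\<close>.\<close>
  define EY where "EY n = measure_pmf.expectation (P n) (\<lambda>k. (Yval n (m n) k)\<^sup>2)" for n
  define ER where "ER n = measure_pmf.expectation (RIG n (m n) (P n)) (\<lambda>S. real (num_rainbow_K4 n S))" for n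
  have ER_le: "ER n \<le> EY n ^ 4 / fact 4" if "n \<ge> 1" for n
    unfolding ER_def EY_def using m_pos P_supp that by (intro expected_num_rainbow_K4_le)
  have EY4_bdd: "(\<lambda>n. EY n ^ 4 / fact 4) \<in> O(\<lambda>_. 1)"
    using landau_o.big_power[OF EY2_bdd, of 4] unfolding EY_def by simp
  have "\<forall>\<^sub>F n in sequentially. 0 \<le> ER n \<and> ER n \<le> EY n ^ 4 / fact 4"
    using eventually_ge_at_top[of 1]
    by eventually_elim (use ER_le in \<open>auto simp: ER_def intro!: Bochner_Integration.integral_nonneg_AE\<close>)
  then have ER_bdd: "ER \<in> O(\<lambda>_. 1)"
    using EY4_bdd by (rule bigo_one_of_le)
  have "(\<lambda>n. measure_pmf.prob (RIG n (m n) (P n)) {S. has_rainbow_K4 n S}) \<longlonglongrightarrow> 0"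
    if "\<forall>n. \<epsilon> n > 0" "\<epsilon> \<longlonglongrightarrow> 0"
      "(\<lambda>n. real n * measure_pmf.prob (P n) {k. Yval n (m n) k \<ge> \<epsilon> n * sqrt (real n)}) \<longlonglongrightarrow> 0"
    for \<epsilon> :: "nat \<Rightarrow> real"
  proof (rule tendsto_zero_of_le_add_mult_bigo_one[OF _ that(3) _ EY4_bdd])
    show "(\<lambda>n. \<epsilon> n ^ 4) \<longlonglongrightarrow> 0"
      using tendsto_power[OF that(2), of 4] by simp
    show "\<forall>\<^sub>F n in sequentially. 0 \<le> measure_pmf.prob (RIG n (m n) (P n)) {S. has_rainbow_K4 n S}
            \<and> measure_pmf.prob (RIG n (m n) (P n)) {S. has_rainbow_K4 n S}
              \<le> real n * measure_pmf.prob (P n) {k. Yval n (m n) k \<ge> \<epsilon> n * sqrt (real n)}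
                + \<epsilon> n ^ 4 * (EY n ^ 4 / fact 4)"
      using eventually_ge_at_top[of 1]
      by eventually_elim (unfold EY_def, intro conjI measure_nonneg prob_has_rainbow_K4_le m_pos P_supp
          that(1)[rule_format])
  qed
  then show ?thesis
    using ER_le ER_bdd unfolding ER_def EY_def by blast
qed

end
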